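(* In the Standing Setting, with $c,d$ defined for a flag $(p,B)$ as below and $\lambda^*=\lambda/(r,\lambda)$, we have $\lambda^*=c+d-2$.
   Context: Standing Setting: $\mathcal{D}=(\Omega,\mathcal{B})$ is a non-trivial $2$-$(v,k,\lambda)$ design (every two distinct points in exactly $\lambda$ blocks, blocks of size $k$, $2<k<v$) with $b$ blocks and replication number $r$, satisfying $\lambda\ge (r,\lambda)^2$. $G\le\mathrm{Aut}(\mathcal{D})$ is flag-transitive (transitive on pairs $(p,B)$ with $p\in B\in\mathcal{B}$). Moreover $\Omega=\Delta\times\Delta$ with $|\Delta|=\omega\ge 5$ odd, so $v=\omega^2$, and $T\times T\trianglelefteq G\le T_0\wr \mathbb{Z}_2$ acting in product action (the $\mathbb{Z}_2$ interchanging the two coordinates), where $T_0\le\mathrm{Sym}(\Delta)$ is $2$-transitive with nonabelian simple socle $T$; $G$ has rank $3$ on $\Omega$. For a flag $(p,B)$ with $p=(\alpha,\beta)$, $c$ is the number of points of $B$ with first coordinate $\alpha$ and $d$ the number of points of $B$ with second coordinate $\beta$. *)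

theory Defs
  imports "HOL-Algebra.SimpleGroups" "HOL-Algebra.Bij" "HOL-Algebra.Generated_Groups"
begin

definition pgrp :: "'a set \<Rightarrow> ('a \<Rightarrow> 'a) set \<Rightarrow> ('a \<Rightarrow> 'a) monoid" where
  "pgrp S G = (BijGroup S)\<lparr>carrier := G\<rparr>"

definition minimal_normal :: "('g, 'b) monoid_scheme \<Rightarrow> 'g set \<Rightarrow> bool" where
  "minimal_normal H N \<longleftrightarrow> N \<lhd> H \<and> N \<noteq> {\<one>\<^bsub>H\<^esub>} \<and>
     (\<forall>M. M \<lhd> H \<and> M \<subseteq> N \<longrightarrow> M = {\<one>\<^bsub>H\<^esub>} \<or> M = N)"

definition socle :: "('g, 'b) monoid_scheme \<Rightarrow> 'g set" where
  "socle H = generate H (\<Union>{N. minimal_normal H N})"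

definition two_transitive :: "'a set \<Rightarrow> ('a \<Rightarrow> 'a) set \<Rightarrow> bool" where
  "two_transitive S G \<longleftrightarrow> (\<forall>a\<in>S. \<forall>b\<in>S. \<forall>c\<in>S. \<forall>d\<in>S.
     a \<noteq> b \<longrightarrow> c \<noteq> d \<longrightarrow> (\<exists>f\<in>G. f a = c \<and> f b = d))"

definition prod_elem :: "'a set \<Rightarrow> ('a \<Rightarrow> 'a) \<Rightarrow> ('a \<Rightarrow> 'a) \<Rightarrow> ('a \<times> 'a \<Rightarrow> 'a \<times> 'a)" where
  "prod_elem D f g = restrict (\<lambda>(x, y). (f x, g y)) (D \<times> D)"

(* (f,g) composed with the coordinate swap \<tau>(x,y) = (y,x) *)
definition swap_elem :: "'a set \<Rightarrow> ('a \<Rightarrow> 'a) \<Rightarrow> ('a \<Rightarrow> 'a) \<Rightarrow> ('a \<times> 'a \<Rightarrow> 'a \<times> 'a)" where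
  "swap_elem D f g = restrict (\<lambda>(x, y). (f y, g x)) (D \<times> D)"

definition base_group :: "'a set \<Rightarrow> ('a \<Rightarrow> 'a) set \<Rightarrow> ('a \<times> 'a \<Rightarrow> 'a \<times> 'a) set" where
  "base_group D K = {prod_elem D f g | f g. f \<in> K \<and> g \<in> K}"

(* K wr Z_2 in product action on D \<times> D *)
definition wreath_product_action :: "'a set \<Rightarrow> ('a \<Rightarrow> 'a) set \<Rightarrow> ('a \<times> 'a \<Rightarrow> 'a \<times> 'a) set" where
  "wreath_product_action D K = base_group D K \<union> {swap_elem D f g | f g. f \<in> K \<and> g \<in> K}"

definition perm_rank :: "'a set \<Rightarrow> ('a \<Rightarrow> 'a) set \<Rightarrow> nat" where
  "perm_rank S G = card ((\<lambda>(p, q). {(g p, g q) | g. g \<in> G}) ` (S \<times> S))"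

definition design2 :: "'p set \<Rightarrow> 'p set set \<Rightarrow> nat \<Rightarrow> nat \<Rightarrow> bool" where
  "design2 \<Omega> \<B> k lam \<longleftrightarrow> finite \<Omega> \<and> 0 < lam \<and> 2 < k \<and> k < card \<Omega> \<and>
     (\<forall>B\<in>\<B>. B \<subseteq> \<Omega> \<and> card B = k) \<and>
     (\<forall>p\<in>\<Omega>. \<forall>q\<in>\<Omega>. p \<noteq> q \<longrightarrow> card {B\<in>\<B>. p \<in> B \<and> q \<in> B} = lam)"

definition automorphisms_of :: "'p set set \<Rightarrow> ('p \<Rightarrow> 'p) set \<Rightarrow> bool" where
  "automorphisms_of \<B> G \<longleftrightarrow> (\<forall>g\<in>G. \<forall>B\<in>\<B>. g ` B \<in> \<B>)"

definition flag_transitive :: "'p set set \<Rightarrow> ('p \<Rightarrow> 'p) set \<Rightarrow> bool" where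
  "flag_transitive \<B> G \<longleftrightarrow> (\<forall>p B q C. B \<in> \<B> \<longrightarrow> p \<in> B \<longrightarrow> C \<in> \<B> \<longrightarrow> q \<in> C \<longrightarrow>
     (\<exists>g\<in>G. g p = q \<and> g ` B = C))"

end

theory Submission
  imports Defs "HOL-Analysis.Convex"
begin

text \<open>
  Let \<open>p = (\<alpha>, \<beta>)\<close> and let \<open>S\<close> be the \<open>2(\<omega> - 1)\<close> points other than \<open>p\<close> in the row or
  column of \<open>p\<close>. Every element of \<open>T\<^sub>0 \<wr> Z\<^sub>2\<close> fixing \<open>p\<close> maps rows and columns to rows and
  columns, so it preserves \<open>S\<close>; by flag-transitivity every block through \<open>p\<close> therefore meets \<open>S\<close>
  in the same number \<open>x = c + d - 2\<close> of points, and counting flags gives \<open>r x = 2\<lambda>(\<omega> - 1)\<close>,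
  besides \<open>r(k - 1) = \<lambda>(\<omega>\<^sup>2 - 1)\<close>. Writing \<open>r = g r'\<close>, \<open>\<lambda> = g \<lambda>*\<close> with \<open>g = (r, \<lambda>)\<close>, coprimality
  gives \<open>2(\<omega> - 1) = r' m\<close>, \<open>x = \<lambda>* m\<close> and \<open>2(k - 1) = \<lambda>* m (\<omega> + 1)\<close>. Fisher's inequality
  \<open>k \<le> r\<close> together with \<open>\<lambda>* \<ge> g\<close> (from \<open>\<lambda> \<ge> g\<^sup>2\<close>) then forces \<open>m = 1\<close>, that is \<open>x = \<lambda>*\<close>.
\<close>

text \<open>
  The Cauchy--Schwarz bound on the intersection sizes of a fixed block with the other \<open>b - 1\<close>
  blocks becomes \<open>r(r - k)(v - k)\<^sup>2 \<ge> 0\<close> once \<open>b\<close> and \<open>l\<close> are eliminated.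
\<close>

lemma fisher_inequality_arith:
  fixes b k v r l :: real
  assumes bk: "b * k = v * r" and lv: "l * (v - 1) = r * (k - 1)"
    and csi: "(k * (r - 1))\<^sup>2 \<le> (b - 1) * (k * (r - 1) + k * (k - 1) * (l - 1))"
    and vk: "v > k" and k: "k > 2" and r: "r > 0"
  shows "k \<le> r"
proof -
  define E where "E = (k - 1) * l + r - k"
  have S: "k * (r - 1) + k * (k - 1) * (l - 1) = k * E" by (simp add: E_def algebra_simps)
  have h1: "(b - 1) * (k * E) = (v * r - k) * E"
    using bk by (simp add: algebra_simps)
  have h2: "(v - 1) * E = r * (k - 1)^2 + (r - k) * (v - 1)"
  proof -
    have "(v - 1) * E = (k - 1) * (l * (v - 1)) + (r - k) * (v - 1)"
      by (simp add: E_def algebra_simps)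
    also have "\<dots> = r * (k - 1)^2 + (r - k) * (v - 1)" using lv by (simp add: power2_eq_square)
    finally show ?thesis .
  qed
  have "(v - 1) * ((b - 1) * (k * E) - (k * (r - 1))\<^sup>2)
      = (v * r - k) * ((v - 1) * E) - (v - 1) * (k * (r - 1))\<^sup>2"
    unfolding h1 by (simp add: algebra_simps)
  also have "\<dots> = r * (r - k) * (v - k)^2"
    unfolding h2 by (simp add: power2_eq_square algebra_simps)
  finally have eq: "(v - 1) * ((b - 1) * (k * E) - (k * (r - 1))\<^sup>2) = r * (r - k) * (v - k)^2" .
  have "0 \<le> (v - 1) * ((b - 1) * (k * E) - (k * (r - 1))\<^sup>2)"
    using csi S vk k by (intro mult_nonneg_nonneg) auto
  then have "0 \<le> r * ((r - k) * (v - k)^2)" using eq by (simp add: mult.assoc)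
  then have "0 \<le> (r - k) * (v - k)^2" using r by (simp add: zero_le_mult_iff)
  moreover have "(v - k)^2 > 0" using vk by simp
  ultimately show ?thesis by (simp add: zero_le_mult_iff)
qed

locale design_with_replication =
  fixes \<Omega> :: "'p set" and \<B> :: "'p set set" and k lam r :: nat
  assumes design: "design2 \<Omega> \<B> k lam"
    and replication: "\<And>p. p \<in> \<Omega> \<Longrightarrow> card {B\<in>\<B>. p \<in> B} = r"
begin

lemma finite_points: "finite \<Omega>"
  and lam_pos: "lam > 0"
  and k_gt_2: "k > 2"
  and k_less_card_points: "k < card \<Omega>"
  and block_subset: "B \<in> \<B> \<Longrightarrow> B \<subseteq> \<Omega>"
  and card_block: "B \<in> \<B> \<Longrightarrow> card B = k"
  and card_blocks_through_pair:
    "\<lbrakk>p \<in> \<Omega>; q \<in> \<Omega>; p \<noteq> q\<rbrakk> \<Longrightarrow> card {B\<in>\<B>. p \<in> B \<and> q \<in> B} = lam"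
  using design unfolding design2_def by auto

lemma finite_blocks: "finite \<B>"
  using finite_points block_subset by (metis finite_Pow_iff finite_subset subsetI PowI)

lemma finite_block: "B \<in> \<B> \<Longrightarrow> finite B"
  using finite_points block_subset finite_subset by blast

lemma sum_card_Int_blocks_through:
  assumes p: "p \<in> \<Omega>" and S: "S \<subseteq> \<Omega> - {p}"
  shows "(\<Sum>B\<in>{B\<in>\<B>. p \<in> B}. card (B \<inter> S)) = lam * card S"
proof -
  have "(\<Sum>B\<in>{B\<in>\<B>. p \<in> B}. card (B \<inter> S)) = (\<Sum>B\<in>{B\<in>\<B>. p \<in> B}. card {q\<in>S. q \<in> B})"
    by (simp add: Int_commute Collect_conj_eq)
  also have "\<dots> = (\<Sum>q\<in>S. lam)"
  proof (rule sum_multicount_gen)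
    show "finite S" using S finite_points finite_subset by blast
    show "\<forall>q\<in>S. card {B\<in>{B\<in>\<B>. p \<in> B}. q \<in> B} = lam"
      using S p card_blocks_through_pair by auto
  qed (simp add: finite_blocks)
  finally show ?thesis by simp
qed

lemma const_card_Int_blocks_through:
  assumes p: "p \<in> \<Omega>" and S: "S \<subseteq> \<Omega> - {p}"
    and const: "\<And>B. B \<in> \<B> \<Longrightarrow> p \<in> B \<Longrightarrow> card (B \<inter> S) = x"
  shows "r * x = lam * card S"
  using sum_card_Int_blocks_through[OF p S] replication[OF p] const by simp

lemma replication_eq: "r * (k - 1) = lam * (card \<Omega> - 1)"
proof -
  obtain p where p: "p \<in> \<Omega>" using k_less_card_points by fastforce
  have "B \<inter> (\<Omega> - {p}) = B - {p}" if "B \<in> \<B>" for B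
    using block_subset[OF that] by blast
  then have "r * (k - 1) = lam * card (\<Omega> - {p})"
    by (intro const_card_Int_blocks_through[OF p]) (auto simp: card_block finite_block)
  then show ?thesis using p finite_points by simp
qed

lemma replication_pos: "r > 0"
  using replication_eq lam_pos k_gt_2 k_less_card_points by (cases r) auto

lemma card_blocks_mult_k: "card \<B> * k = card \<Omega> * r"
proof -
  have "(\<Sum>B\<in>\<B>. card {p\<in>\<Omega>. p \<in> B}) = (\<Sum>p\<in>\<Omega>. r)"
    by (rule sum_multicount_gen) (auto simp: finite_blocks finite_points replication)
  moreover have "{p\<in>\<Omega>. p \<in> B} = B" if "B \<in> \<B>" for B
    using block_subset[OF that] by blast
  ultimately show ?thesis by (simp add: card_block)
qed

lemma card_other_blocks:
  assumes "B \<in> \<B>" and "P B"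
  shows "card {C\<in>\<B> - {B}. P C} = card {C\<in>\<B>. P C} - 1"
proof -
  have "{C\<in>\<B> - {B}. P C} = {C\<in>\<B>. P C} - {B}" by blast
  then show ?thesis using assms finite_blocks by simp
qed

lemma sum_card_Int_other_blocks:
  assumes B: "B \<in> \<B>"
  shows "(\<Sum>C\<in>\<B> - {B}. card (C \<inter> B)) = k * (r - 1)"
proof -
  have "(\<Sum>C\<in>\<B> - {B}. card (C \<inter> B)) = (\<Sum>C\<in>\<B> - {B}. card {p\<in>B. p \<in> C})"
    by (simp add: Int_commute Collect_conj_eq)
  also have "\<dots> = (\<Sum>p\<in>B. r - 1)"
    using B block_subset[OF B] card_other_blocks[OF B] replication
    by (intro sum_multicount_gen) (auto simp: finite_blocks finite_block)
  finally show ?thesis using B card_block by simp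
qed

lemma sum_card_Int_other_blocks_squared:
  assumes B: "B \<in> \<B>"
  shows "(\<Sum>C\<in>\<B> - {B}. (card (C \<inter> B))\<^sup>2) = k * ((r - 1) + (k - 1) * (lam - 1))"
proof -
  define n :: "'p \<times> 'p \<Rightarrow> nat" where "n = (\<lambda>(p, q). if p = q then r - 1 else lam - 1)"
  have "(\<Sum>C\<in>\<B> - {B}. (card (C \<inter> B))\<^sup>2) = (\<Sum>C\<in>\<B> - {B}. card {z\<in>B \<times> B. z \<in> C \<times> C})"
  proof (rule sum.cong[OF refl])
    fix C
    have "{z\<in>B \<times> B. z \<in> C \<times> C} = (C \<inter> B) \<times> (C \<inter> B)" by blast
    then show "(card (C \<inter> B))\<^sup>2 = card {z\<in>B \<times> B. z \<in> C \<times> C}"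
      by (simp add: card_cartesian_product power2_eq_square)
  qed
  also have "\<dots> = (\<Sum>z\<in>B \<times> B. n z)"
  proof (rule sum_multicount_gen)
    show "\<forall>z\<in>B \<times> B. card {C\<in>\<B> - {B}. z \<in> C \<times> C} = n z"
    proof (clarify)
      fix p q assume pq: "p \<in> B" "q \<in> B"
      then have "card {C\<in>\<B> - {B}. (p, q) \<in> C \<times> C} = card {C\<in>\<B>. p \<in> C \<and> q \<in> C} - 1"
        using card_other_blocks[OF B, of "\<lambda>C. p \<in> C \<and> q \<in> C"] by simp
      moreover have "p \<in> \<Omega>" "q \<in> \<Omega>" using pq block_subset[OF B] by auto
      ultimately show "card {C\<in>\<B> - {B}. (p, q) \<in> C \<times> C} = n (p, q)"
        unfolding n_def using replication card_blocks_through_pair by (cases "p = q") simp_all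
    qed
  qed (use B finite_block finite_blocks in auto)
  also have "\<dots> = (\<Sum>p\<in>B. \<Sum>q\<in>B. n (p, q))"
    by (simp add: sum.cartesian_product)
  also have "\<dots> = (\<Sum>p\<in>B. n (p, p) + (\<Sum>q\<in>B - {p}. n (p, q)))"
    using finite_block[OF B] by (intro sum.cong refl) (simp add: sum.remove)
  also have "\<dots> = (\<Sum>p\<in>B. (r - 1) + (k - 1) * (lam - 1))"
  proof (intro sum.cong refl)
    fix p assume p: "p \<in> B"
    have "(\<Sum>q\<in>B - {p}. n (p, q)) = (\<Sum>q\<in>B - {p}. lam - 1)"
      by (intro sum.cong) (auto simp: n_def)
    then show "n (p, p) + (\<Sum>q\<in>B - {p}. n (p, q)) = (r - 1) + (k - 1) * (lam - 1)"
      using p finite_block[OF B] card_block[OF B] by (simp add: n_def)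
  qed
  finally show ?thesis using card_block[OF B] by simp
qed

theorem fisher_inequality: "k \<le> r"
proof -
  have "\<Omega> \<noteq> {}" using k_less_card_points by auto
  then obtain p where "p \<in> \<Omega>" by blast
  then have "card {B\<in>\<B>. p \<in> B} > 0" using replication_pos by (simp add: replication)
  then obtain B where B: "B \<in> \<B>" by (auto simp: card_gt_0_iff)
  define X where "X = \<B> - {B}"
  define f where "f = (\<lambda>C. real (card (C \<inter> B)))"
  have r1: "r \<ge> 1" using replication_pos by simp
  have sum_f: "(\<Sum>C\<in>X. f C) = real k * (real r - 1)"
    using sum_card_Int_other_blocks[OF B] r1
    unfolding f_def X_def by (simp flip: of_nat_sum add: of_nat_diff)
  have sum_f_sq: "(\<Sum>C\<in>X. (f C)\<^sup>2) = real k * ((real r - 1) + (real k - 1) * (real lam - 1))"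
    using sum_card_Int_other_blocks_squared[OF B] r1 k_gt_2 lam_pos
    unfolding f_def X_def by (simp flip: of_nat_sum of_nat_power add: of_nat_diff)
  have "card \<B> > 0" using B finite_blocks card_gt_0_iff by blast
  then have card_X: "real (card X) = real (card \<B>) - 1"
    using B finite_blocks unfolding X_def by (simp add: of_nat_diff)
  have blocks: "real (card \<B>) * real k = real (card \<Omega>) * real r"
    using card_blocks_mult_k by (metis of_nat_mult)
  have "real (r * (k - 1)) = real (lam * (card \<Omega> - 1))" using replication_eq by simp
  then have repl: "real lam * (real (card \<Omega>) - 1) = real r * (real k - 1)"
    using k_gt_2 k_less_card_points by (simp add: of_nat_diff)
  have "(real k * (real r - 1))\<^sup>2
      \<le> (real (card \<B>) - 1) * (real k * (real r - 1) + real k * (real k - 1) * (real lam - 1))"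
    using sum_squared_le_sum_of_squares[of f X]
    unfolding sum_f sum_f_sq card_X by (simp add: algebra_simps)
  from fisher_inequality_arith[OF blocks repl this] show ?thesis
    using k_gt_2 k_less_card_points replication_pos by simp
qed

end

lemma flag_transitive_card_Int_eq:
  assumes flag: "flag_transitive \<B> G" and G: "G \<subseteq> Bij \<Omega>"
    and S: "S \<subseteq> \<Omega>" "finite S"
    and stable: "\<And>g. g \<in> G \<Longrightarrow> g p = p \<Longrightarrow> g ` S \<subseteq> S"
    and B: "B \<in> \<B>" "p \<in> B" and C: "C \<in> \<B>" "p \<in> C"
  shows "card (B \<inter> S) = card (C \<inter> S)"
proof -
  have le: "card (B' \<inter> S) \<le> card (C' \<inter> S)"
    if "B' \<in> \<B>" "p \<in> B'" "C' \<in> \<B>" "p \<in> C'" for B' C'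
  proof -
    have "\<exists>g\<in>G. g p = p \<and> g ` B' = C'"
      using flag that unfolding flag_transitive_def by simp
    then obtain g where g: "g \<in> G" "g p = p" "g ` B' = C'" by blast
    have "card (B' \<inter> S) = card (g ` (B' \<inter> S))"
    proof (rule card_image[symmetric], rule inj_on_subset)
      show "inj_on g \<Omega>" using G g(1) by (auto simp: Bij_def bij_betw_def)
    qed (use S in blast)
    also have "\<dots> \<le> card (C' \<inter> S)"
      using g stable[OF g(1,2)] S by (intro card_mono) auto
    finally show ?thesis .
  qed
  show ?thesis using le[OF B C] le[OF C B] by (rule antisym)
qed

definition cross :: "'a set \<Rightarrow> 'a \<times> 'a \<Rightarrow> ('a \<times> 'a) set" where
  "cross \<Delta> p = {q \<in> \<Delta> \<times> \<Delta>. q \<noteq> p \<and> (fst q = fst p \<or> snd q = snd p)}"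

lemma card_cross:
  assumes "finite \<Delta>" and "p \<in> \<Delta> \<times> \<Delta>"
  shows "card (cross \<Delta> p) = 2 * (card \<Delta> - 1)"
proof -
  obtain a b where p: "p = (a, b)" "a \<in> \<Delta>" "b \<in> \<Delta>" using assms(2) by auto
  have "cross \<Delta> p = {a} \<times> (\<Delta> - {b}) \<union> (\<Delta> - {a}) \<times> {b}"
    unfolding cross_def p using p by auto
  moreover have "{a} \<times> (\<Delta> - {b}) \<inter> (\<Delta> - {a}) \<times> {b} = {}" by auto
  ultimately show ?thesis
    using assms(1) p by (simp add: card_Un_disjoint card_cartesian_product)
qed

lemma wreath_product_action_stabiliser_preserves_cross:
  assumes g: "g \<in> wreath_product_action \<Delta> K" "g \<in> Bij (\<Delta> \<times> \<Delta>)"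
    and p: "p \<in> \<Delta> \<times> \<Delta>" "g p = p"
  shows "g ` cross \<Delta> p \<subseteq> cross \<Delta> p"
proof
  fix q' assume "q' \<in> g ` cross \<Delta> p"
  then obtain q where q: "q \<in> cross \<Delta> p" and q': "q' = g q" by blast
  obtain a b where ab: "p = (a, b)" "a \<in> \<Delta>" "b \<in> \<Delta>" using p(1) by auto
  obtain x y where xy: "q = (x, y)" "x \<in> \<Delta>" "y \<in> \<Delta>" using q unfolding cross_def by auto
  have bij: "bij_betw g (\<Delta> \<times> \<Delta>) (\<Delta> \<times> \<Delta>)" using g(2) by (simp add: Bij_def)
  have q_pt: "q \<in> \<Delta> \<times> \<Delta>" "q \<noteq> p" using q unfolding cross_def by auto
  have "g q \<in> \<Delta> \<times> \<Delta>" using bij q_pt(1) by (rule bij_betw_apply)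
  moreover have "g q \<noteq> p"
    using bij_betw_imp_inj_on[OF bij] q_pt p by (metis inj_onD)
  moreover have "fst (g q) = a \<or> snd (g q) = b"
    using g(1) unfolding wreath_product_action_def base_group_def
  proof (elim UnE CollectE exE conjE)
    fix f h assume "g = prod_elem \<Delta> f h"
    then show ?thesis
      using p(2) ab xy q unfolding prod_elem_def cross_def by auto
  next
    fix f h assume "g = swap_elem \<Delta> f h"
    then show ?thesis
      using p(2) ab xy q unfolding swap_elem_def cross_def by auto
  qed
  ultimately show "q' \<in> cross \<Delta> p" unfolding q' cross_def ab by auto
qed

lemma card_Int_cross:
  assumes "finite B" and "B \<subseteq> \<Delta> \<times> \<Delta>" and "p \<in> B"
  shows "int (card (B \<inter> cross \<Delta> p))
           = int (card {x\<in>B. fst x = fst p}) + int (card {x\<in>B. snd x = snd p}) - 2"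
proof -
  define R D where "R = {x\<in>B. fst x = fst p}" and "D = {x\<in>B. snd x = snd p}"
  have "B \<inter> cross \<Delta> p = (R - {p}) \<union> (D - {p})" and "(R - {p}) \<inter> (D - {p}) = {}"
    using assms(2) unfolding R_def D_def cross_def by (auto simp: prod_eq_iff)
  moreover have "finite R" "finite D" "p \<in> R" "p \<in> D"
    using assms(1,3) unfolding R_def D_def by auto
  moreover from this have "card R > 0" "card D > 0" by (auto simp: card_gt_0_iff)
  ultimately show ?thesis
    unfolding R_def[symmetric] D_def[symmetric] by (simp add: card_Un_disjoint of_nat_diff)
qed

lemma lam_div_gcd_eq:
  fixes r lam x k w :: nat
  assumes hx: "r * x = lam * (2 * (w - 1))"
    and hk: "r * (k - 1) = lam * (w * w - 1)"
    and kr: "k \<le> r" and gcd_sq: "(gcd r lam)\<^sup>2 \<le> lam"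
    and w: "w \<ge> 2" and lam: "lam > 0" and k: "k > 0"
  shows "lam div gcd r lam = x"
proof -
  define g where "g = gcd r lam"
  have g0: "g > 0" using lam by (simp add: g_def)
  obtain r' l' where rr: "r = r' * g" and ll: "lam = l' * g" and cop: "coprime r' l'"
    using gcd_coprime_exists[of r lam] g0 unfolding g_def by auto
  have r'0: "r' > 0" using rr kr k by (cases "r' = 0") auto
  have hx': "r' * x = l' * (2 * (w - 1))" and hk': "r' * (k - 1) = l' * (w * w - 1)"
    using hx hk g0 unfolding rr ll by (simp_all add: ac_simps)
  then have "r' dvd 2 * (w - 1)"
    using cop by (metis coprime_dvd_mult_right_iff dvd_triv_left)
  then obtain m where m: "2 * (w - 1) = r' * m" by auto
  have xm: "x = l' * m"
    using hx' r'0 unfolding m by (simp add: ac_simps)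
  have m0: "m > 0" using m w by (cases "m = 0") auto
  have "r' * (2 * (k - 1)) = l' * (2 * (w * w - 1))"
    using hk' by (simp add: algebra_simps)
  also have "2 * (w * w - 1) = (w + 1) * (2 * (w - 1))"
    using w by (cases w) (simp_all add: algebra_simps)
  also have "l' * ((w + 1) * (2 * (w - 1))) = r' * (l' * m * (w + 1))"
    unfolding m by (simp only: ac_simps)
  finally have "r' * (2 * (k - 1)) = r' * (l' * (m * (w + 1)))" by (simp only: ac_simps)
  then have k_eq: "2 * k = l' * (m * (w + 1)) + 2" using r'0 k by simp
  have "g * g \<le> l' * g"
    using gcd_sq unfolding g_def[symmetric] ll[symmetric] power2_eq_square .
  then have gl: "g \<le> l'" using g0 by simp
  have "m = 1"
  proof (rule ccontr)
    assume "m \<noteq> 1"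
    then have "4 \<le> m * m" using m0 mult_le_mono[of 2 m 2 m] by simp
    have "m * (2 * k) \<le> 2 * (g * (2 * (w - 1)))"
      using kr unfolding rr m by (simp add: algebra_simps)
    moreover have "g * (m * (w + 1)) \<le> 2 * k"
      using k_eq mult_le_mono1[OF gl, of "m * (w + 1)"] by linarith
    then have "m * (g * (m * (w + 1))) \<le> m * (2 * k)" by (rule mult_le_mono2)
    then have "(m * m) * (g * (w + 1)) \<le> m * (2 * k)" by (simp only: ac_simps)
    moreover have "4 * (g * (w + 1)) \<le> (m * m) * (g * (w + 1))"
      using \<open>4 \<le> m * m\<close> by (rule mult_le_mono1)
    ultimately have "g * (w + 1) \<le> g * (w - 1)" by linarith
    then show False using g0 w by (simp only: mult_le_cancel1) simp
  qed
  then show ?thesis using xm ll g0 unfolding g_def[symmetric] by simp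
qed

theorem lemma2p3:
  fixes \<Delta> :: "'a set" and \<B> :: "('a \<times> 'a) set set"
    and k lam r :: nat
    and G :: "('a \<times> 'a \<Rightarrow> 'a \<times> 'a) set"
    and T0 T :: "('a \<Rightarrow> 'a) set"
  assumes "finite \<Delta>" and "card \<Delta> \<ge> 5" and "odd (card \<Delta>)"
    and des: "design2 (\<Delta> \<times> \<Delta>) \<B> k lam"
    and repl: "\<forall>p\<in>\<Delta> \<times> \<Delta>. card {B\<in>\<B>. p \<in> B} = r"
    and "lam \<ge> (gcd r lam)^2"
    and "subgroup T0 (BijGroup \<Delta>)"
    and "two_transitive \<Delta> T0"
    and "socle (pgrp \<Delta> T0) = T"
    and "simple_group (pgrp \<Delta> T)"
    and "\<not> comm_group (pgrp \<Delta> T)"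
    and "subgroup G (BijGroup (\<Delta> \<times> \<Delta>))"
    and "G \<subseteq> wreath_product_action \<Delta> T0"
    and "base_group \<Delta> T \<lhd> pgrp (\<Delta> \<times> \<Delta>) G"
    and "automorphisms_of \<B> G"
    and "flag_transitive \<B> G"
    and "perm_rank (\<Delta> \<times> \<Delta>) G = 3"
    and "B \<in> \<B>" and "(\<alpha>, \<beta>) \<in> B"
  shows "int (lam div gcd r lam) =
           int (card {x\<in>B. fst x = \<alpha>}) + int (card {x\<in>B. snd x = \<beta>}) - 2"
proof -
  interpret design_with_replication "\<Delta> \<times> \<Delta>" \<B> k lam r
    using des repl by unfold_locales auto
  define p where "p = (\<alpha>, \<beta>)"
  define x where "x = card (B \<inter> cross \<Delta> p)"
  have p: "p \<in> \<Delta> \<times> \<Delta>" "p \<in> B" using block_subset[OF \<open>B \<in> \<B>\<close>] \<open>(\<alpha>, \<beta>) \<in> B\<close> p_def by auto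
  have G_Bij: "G \<subseteq> Bij (\<Delta> \<times> \<Delta>)"
    using subgroup.subset[OF \<open>subgroup G (BijGroup (\<Delta> \<times> \<Delta>))\<close>] by (simp add: BijGroup_def)
  have "card (C \<inter> cross \<Delta> p) = x" if "C \<in> \<B>" "p \<in> C" for C
    unfolding x_def
  proof (rule flag_transitive_card_Int_eq[OF \<open>flag_transitive \<B> G\<close> G_Bij _ _ _ that \<open>B \<in> \<B>\<close> \<open>p \<in> B\<close>])
    show "g ` cross \<Delta> p \<subseteq> cross \<Delta> p" if "g \<in> G" "g p = p" for g
      using that G_Bij p \<open>G \<subseteq> wreath_product_action \<Delta> T0\<close>
      by (intro wreath_product_action_stabiliser_preserves_cross) auto
  qed (auto simp: cross_def \<open>finite \<Delta>\<close>)
  moreover have "cross \<Delta> p \<subseteq> \<Delta> \<times> \<Delta> - {p}" by (auto simp: cross_def)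
  ultimately have "r * x = lam * (2 * (card \<Delta> - 1))"
    using const_card_Int_blocks_through[OF p(1)] card_cross[OF \<open>finite \<Delta>\<close> p(1)] by metis
  moreover have "r * (k - 1) = lam * (card \<Delta> * card \<Delta> - 1)"
    using replication_eq by (simp add: card_cartesian_product)
  ultimately have "lam div gcd r lam = x"
    by (rule lam_div_gcd_eq)
      (use fisher_inequality \<open>lam \<ge> (gcd r lam)^2\<close> \<open>card \<Delta> \<ge> 5\<close> lam_pos k_gt_2 in auto)
  then show ?thesis
    using card_Int_cross[OF finite_block[OF \<open>B \<in> \<B>\<close>] block_subset[OF \<open>B \<in> \<B>\<close>] p(2)]
    unfolding x_def p_def by simp
qed

end
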